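(* There exist absolute constants $c_1,c_2>0$ such that for every $n\ge1$ and every boolean function $f:\{-1,1\}^n\to\{-1,1\}$, $$\mathrm{Ent}(f)\le c_1 I(f)+c_2\sum_{k=2}^{n} I_k(f)\log\frac{1}{I_k(f)},$$ with the convention $I_k(f)\log\frac{1}{I_k(f)}=0$ when $I_k(f)=0$ (i.e. the term for coordinate $k=1$ can be omitted).
   Context: Let $x$ be uniformly distributed on $\{-1,1\}^n$; $\mu_k$ flips the $k$-th coordinate. $I_k(f)=\mathbb{P}_x[f(x)\neq f(\mu_k(x))]$, $I(f)=\sum_k I_k(f)$, $\hat f(S)=\mathbb{E}_x[f(x)\prod_{k\in S}x_k]$ for $S\subseteq[n]$, and $\mathrm{Ent}(f)=\sum_{S\subseteq[n]}\hat f(S)^2\log_2\frac{1}{\hat f(S)^2}$ (terms with $\hat f(S)=0$ are $0$). *)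

theory Defs
  imports Complex_Main
begin

text \<open>Points of the discrete cube {-1,1}^n, coordinates indexed by 1..n;
  coordinates outside 1..n are fixed to 1 so that the cube is a finite set.\<close>
definition cube :: "nat \<Rightarrow> (nat \<Rightarrow> real) set" where
  "cube n = {x. (\<forall>k\<in>{1..n}. x k = -1 \<or> x k = 1) \<and> (\<forall>k. k \<notin> {1..n} \<longrightarrow> x k = 1)}"

definition flip :: "nat \<Rightarrow> (nat \<Rightarrow> real) \<Rightarrow> (nat \<Rightarrow> real)" where
  "flip k x = x(k := - x k)"

definition infl :: "nat \<Rightarrow> ((nat \<Rightarrow> real) \<Rightarrow> real) \<Rightarrow> nat \<Rightarrow> real" where
  "infl n f k = real (card {x \<in> cube n. f x \<noteq> f (flip k x)}) / 2 ^ n"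

definition total_infl :: "nat \<Rightarrow> ((nat \<Rightarrow> real) \<Rightarrow> real) \<Rightarrow> real" where
  "total_infl n f = (\<Sum>k\<in>{1..n}. infl n f k)"

definition fourier :: "nat \<Rightarrow> ((nat \<Rightarrow> real) \<Rightarrow> real) \<Rightarrow> nat set \<Rightarrow> real" where
  "fourier n f S = (\<Sum>x\<in>cube n. f x * (\<Prod>k\<in>S. x k)) / 2 ^ n"

definition spec_ent :: "nat \<Rightarrow> ((nat \<Rightarrow> real) \<Rightarrow> real) \<Rightarrow> real" where
  "spec_ent n f = (\<Sum>S\<in>Pow {1..n}.
      if fourier n f S = 0 then 0
      else (fourier n f S)^2 * log 2 (1 / (fourier n f S)^2))"

definition xlog :: "real \<Rightarrow> real" where
  "xlog t = (if t = 0 then 0 else t * ln (1 / t))"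

end

theory Submission
  imports Defs "HOL-Library.FuncSet"
begin

text \<open>The squared Fourier coefficients \<open>p S = (fourier n f S)\<^sup>2\<close> form a probability
  distribution on the subsets of \<open>{1..n}\<close> whose marginals \<open>\<Sum>\<^bsub>S \<ni> k\<^esub> p S\<close> are the
  influences \<open>I\<^sub>k\<close>.  By Gibbs' inequality the entropy of \<open>p\<close> is at most its cross entropy
  with any reference measure \<open>q\<close> of total mass at most 1.  Let \<open>q\<close> be the product of
  Bernoulli(\<open>I\<^sub>k\<close>) coordinates for \<open>k \<ge> 2\<close>; then the cross entropy splits into the binary
  entropies \<open>H(I\<^sub>k) \<le> I\<^sub>k ln (1/I\<^sub>k) + I\<^sub>k\<close>.  On coordinate 1, \<open>q\<close> is a fair coin on the sets
  meeting \<open>{2..n}\<close>, which costs at most \<open>\<Sum>\<^bsub>k\<ge>2\<^esub> I\<^sub>k\<close>, and splits the remaining mass between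
  \<open>{}\<close> and \<open>{1}\<close> in proportion to \<open>p\<close>, which costs \<open>O(|fourier n f {1}|)\<close>; finally
  \<open>|fourier n f {1}| \<le> I\<^sub>1\<close>.\<close>

section \<open>Elementary inequalities for \<open>t log (1/t)\<close>\<close>

lemma xlog_eq_minus_mult_ln: "xlog t = - (t * ln t)"
  by (simp add: xlog_def ln_div)

lemma gibbs_pointwise:
  assumes "0 < p" "0 < q"
  shows "xlog p \<le> p * - ln q + q - p"
proof -
  have "ln (q / p) \<le> q / p - 1"
    using assms by (intro ln_le_minus_one) simp
  then have "p * ln (q / p) \<le> p * (q / p - 1)"
    using assms by (intro mult_left_mono) auto
  then show ?thesis
    using assms by (simp add: xlog_eq_minus_mult_ln ln_div algebra_simps)
qed

lemma gibbs_inequality: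
  fixes p q :: "'a \<Rightarrow> real"
  assumes "finite P" and p: "\<And>S. S \<in> P \<Longrightarrow> 0 \<le> p S" and q: "\<And>S. S \<in> P \<Longrightarrow> 0 \<le> q S"
    and mass: "sum q P \<le> sum p P"
    and support: "\<And>S. S \<in> P \<Longrightarrow> 0 < p S \<Longrightarrow> 0 < q S"
  shows "(\<Sum>S\<in>P. xlog (p S)) \<le> (\<Sum>S\<in>P. p S * - ln (q S))"
proof -
  have "xlog (p S) \<le> p S * - ln (q S) + q S - p S" if "S \<in> P" for S
  proof (cases "p S = 0")
    case True
    then show ?thesis using q[OF that] by (simp add: xlog_def)
  next
    case False
    then have "0 < p S" using p[OF that] by simp
    then show ?thesis using support[OF that] gibbs_pointwise by blast
  qed
  then have "(\<Sum>S\<in>P. xlog (p S)) \<le> (\<Sum>S\<in>P. p S * - ln (q S) + q S - p S)"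
    by (rule sum_mono)
  also have "\<dots> = (\<Sum>S\<in>P. p S * - ln (q S)) + sum q P - sum p P"
    by (simp add: sum.distrib sum_subtractf sum_negf)
  finally show ?thesis using mass by linarith
qed

lemma xlog_le_one_minus:
  assumes "0 \<le> u"
  shows "xlog u \<le> 1 - u"
proof (cases "u = 0")
  case False
  then have u: "0 < u" using assms by simp
  have "ln (1 / u) \<le> 1 / u - 1"
    using u by (intro ln_le_minus_one) simp
  then have "u * ln (1 / u) \<le> u * (1 / u - 1)"
    using u by (intro mult_left_mono) auto
  also have "\<dots> = 1 - u"
    using u by (simp add: field_simps)
  finally show ?thesis
    using u by (simp add: xlog_def)
qed (simp add: xlog_def)

lemma xlog_le_two_sqrt:
  assumes "0 \<le> b"
  shows "xlog b \<le> 2 * sqrt b"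
proof -
  define s where "s = sqrt b"
  have s: "0 \<le> s" "b = s\<^sup>2"
    using assms by (simp_all add: s_def)
  have "xlog b = 2 * (s * xlog s)"
    using s by (cases "s = 0") (auto simp: xlog_eq_minus_mult_ln ln_mult power2_eq_square)
  also have "\<dots> \<le> 2 * (s * (1 - s))"
    using s xlog_le_one_minus[of s] by (simp add: mult_left_mono)
  also have "\<dots> \<le> 2 * s"
    using s by (simp add: algebra_simps)
  finally show ?thesis by (simp add: s_def)
qed

lemma neg_ln_fraction_le:
  fixes x y :: real
  assumes "0 \<le> x" "0 \<le> y"
  shows "x * - ln (x / (x + y)) \<le> y"
proof (cases "x = 0")
  case False
  then have x: "0 < x" using assms by linarith
  have "- ln (x / (x + y)) = ln ((x + y) / x)"
    using x assms by (simp add: ln_div)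
  also have "\<dots> \<le> (x + y) / x - 1"
    using x assms by (intro ln_le_minus_one) simp
  finally have "x * - ln (x / (x + y)) \<le> x * ((x + y) / x - 1)"
    using x by (intro mult_left_mono) auto
  then show ?thesis using x by (simp add: field_simps)
qed (simp add: assms)

lemma neg_ln_fraction_le_xlog:
  assumes "0 \<le> x" "0 \<le> y" "x + y \<le> 1"
  shows "x * - ln (x / (x + y)) \<le> xlog x"
proof (cases "x = 0")
  case False
  then have x: "0 < x" using assms by linarith
  have "ln (x / 1) \<le> ln (x / (x + y))"
    using x assms by (intro ln_mono divide_left_mono) auto
  then show ?thesis
    using x by (simp add: xlog_eq_minus_mult_ln mult_left_mono)
qed (simp add: xlog_def)

section \<open>The discrete cube and Fourier analysis\<close>

lemma bij_betw_cube_PiE: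
  "bij_betw (\<lambda>x. restrict x {1..n}) (cube n) (PiE {1..n} (\<lambda>_. {-1::real, 1}))"
proof (rule bij_betwI[where g = "\<lambda>g k. if k \<in> {1..n} then g k else 1"])
  show "(\<lambda>g k. if k \<in> {1..n} then g k else 1) \<in> PiE {1..n} (\<lambda>_. {-1::real, 1}) \<rightarrow> cube n"
    by (auto simp: cube_def PiE_def Pi_def)
  show "restrict (\<lambda>k. if k \<in> {1..n} then g k else 1) {1..n} = g"
    if "g \<in> PiE {1..n} (\<lambda>_. {-1::real, 1})" for g
    using that by (auto simp: PiE_def extensional_def)
qed (auto simp: cube_def)

lemma finite_cube: "finite (cube n)"
  using bij_betw_finite[OF bij_betw_cube_PiE] by (simp add: finite_PiE)

lemma card_cube: "card (cube n) = 2 ^ n"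
  using bij_betw_same_card[OF bij_betw_cube_PiE] by (simp add: card_PiE flip: numeral_2_eq_2)

lemma cube_coordinate: "x \<in> cube n \<Longrightarrow> k \<in> {1..n} \<Longrightarrow> x k = -1 \<or> x k = 1"
  by (auto simp: cube_def)

lemma flip_in_cube: "k \<in> {1..n} \<Longrightarrow> x \<in> cube n \<Longrightarrow> flip k x \<in> cube n"
  by (auto simp: cube_def flip_def)

lemma flip_flip [simp]: "flip k (flip k x) = x"
  by (auto simp: flip_def)

lemma bij_betw_flip: "k \<in> {1..n} \<Longrightarrow> bij_betw (flip k) (cube n) (cube n)"
  by (rule bij_betwI[where g = "flip k"]) (auto simp: flip_in_cube)

lemma prod_flip:
  assumes "finite S"
  shows "(\<Prod>j\<in>S. flip k x j) = (if k \<in> S then - (\<Prod>j\<in>S. x j) else (\<Prod>j\<in>S. x j))"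
proof (cases "k \<in> S")
  case True
  have "(\<Prod>j\<in>S-{k}. flip k x j) = (\<Prod>j\<in>S-{k}. x j)"
    by (rule prod.cong) (auto simp: flip_def)
  then show ?thesis
    using True prod.remove[OF assms True, of "flip k x"] prod.remove[OF assms True, of x]
    by (simp add: flip_def)
qed (auto intro!: prod.cong simp: flip_def)

lemma sum_characters_product:
  assumes x: "x \<in> cube n" and y: "y \<in> cube n"
  shows "(\<Sum>S\<in>Pow {1..n}. (\<Prod>k\<in>S. x k) * (\<Prod>k\<in>S. y k)) = (if x = y then 2 ^ n else 0)"
proof -
  have "(\<Sum>S\<in>Pow {1..n}. (\<Prod>k\<in>S. x k) * (\<Prod>k\<in>S. y k)) =
        (\<Sum>S\<in>Pow {1..n}. (\<Prod>k\<in>S. x k * y k) * (\<Prod>k\<in>{1..n}-S. 1))"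
    by (simp add: prod.distrib)
  also have "\<dots> = (\<Prod>k\<in>{1..n}. x k * y k + 1)"
    by (rule prod_add[symmetric]) simp
  also have "\<dots> = (if x = y then 2 ^ n else 0)"
  proof (cases "x = y")
    case True
    then have "x k * y k + 1 = 2" if "k \<in> {1..n}" for k
      using cube_coordinate[OF x that] by auto
    then show ?thesis using True by simp
  next
    case False
    then obtain k where k: "x k \<noteq> y k" by auto
    have "k \<in> {1..n}"
      using k x y by (cases "k \<in> {1..n}") (auto simp: cube_def)
    moreover have "x k * y k + 1 = 0"
      using k cube_coordinate[OF x \<open>k \<in> {1..n}\<close>] cube_coordinate[OF y \<open>k \<in> {1..n}\<close>] by auto
    ultimately show ?thesis using False by (auto intro: prod_zero)
  qed
  finally show ?thesis .
qed

lemma parseval: "(\<Sum>S\<in>Pow {1..n}. (fourier n g S)\<^sup>2) = (\<Sum>x\<in>cube n. (g x)\<^sup>2) / 2 ^ n"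
proof -
  let ?C = "cube n" and ?P = "Pow {1..n}" and ?\<chi> = "\<lambda>S x. \<Prod>k\<in>S. x k"
  have "(\<Sum>S\<in>?P. (\<Sum>x\<in>?C. g x * ?\<chi> S x) * (\<Sum>y\<in>?C. g y * ?\<chi> S y)) =
        (\<Sum>S\<in>?P. \<Sum>x\<in>?C. \<Sum>y\<in>?C. g x * g y * (?\<chi> S x * ?\<chi> S y))"
    by (simp add: sum_product algebra_simps)
  also have "\<dots> = (\<Sum>x\<in>?C. \<Sum>y\<in>?C. \<Sum>S\<in>?P. g x * g y * (?\<chi> S x * ?\<chi> S y))"
    by (rule trans[OF sum.swap], rule sum.cong[OF refl], rule sum.swap)
  also have "\<dots> = (\<Sum>x\<in>?C. \<Sum>y\<in>?C. g x * g y * (\<Sum>S\<in>?P. ?\<chi> S x * ?\<chi> S y))"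
    by (simp add: sum_distrib_left)
  also have "\<dots> = (\<Sum>x\<in>?C. \<Sum>y\<in>?C. if x = y then g x * g y * 2 ^ n else 0)"
    by (intro sum.cong refl) (subst sum_characters_product, auto)
  also have "\<dots> = (\<Sum>x\<in>?C. (g x)\<^sup>2) * 2 ^ n"
    by (simp add: finite_cube power2_eq_square sum_distrib_right)
  finally show ?thesis
    by (simp add: fourier_def power2_eq_square power_divide sum_divide_distrib[symmetric])
qed

lemma fourier_half_difference:
  assumes k: "k \<in> {1..n}" and "finite S"
  shows "fourier n (\<lambda>x. (f x - f (flip k x)) / 2) S = (if k \<in> S then fourier n f S else 0)"
proof -
  have "(\<Sum>x\<in>cube n. f (flip k x) * (\<Prod>j\<in>S. x j)) =
        (\<Sum>x\<in>cube n. f (flip k x) * (\<Prod>j\<in>S. flip k (flip k x) j))"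
    by simp
  also have "\<dots> = (\<Sum>y\<in>cube n. f y * (\<Prod>j\<in>S. flip k y j))"
    by (rule sum.reindex_bij_betw[OF bij_betw_flip[OF k]])
  also have "\<dots> = (if k \<in> S then - 1 else 1) * (\<Sum>y\<in>cube n. f y * (\<Prod>j\<in>S. y j))"
    by (simp add: prod_flip[OF \<open>finite S\<close>] sum_negf)
  finally show ?thesis
    by (auto simp: fourier_def sum_subtractf algebra_simps simp flip: sum_divide_distrib)
qed

section \<open>Influences of Boolean functions\<close>

lemma boolean_half_difference:
  fixes f :: "(nat \<Rightarrow> real) \<Rightarrow> real"
  assumes f: "\<forall>x\<in>cube n. f x = -1 \<or> f x = 1" and k: "k \<in> {1..n}" and x: "x \<in> cube n"
  shows "((f x - f (flip k x)) / 2)\<^sup>2 = of_bool (f x \<noteq> f (flip k x))"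
    and "\<bar>(f x - f (flip k x)) / 2\<bar> = of_bool (f x \<noteq> f (flip k x))"
  using f[rule_format, OF x] f[rule_format, OF flip_in_cube[OF k x]]
  by (auto simp: power2_eq_square)

lemma infl_eq_sum_half_difference_sq:
  fixes f :: "(nat \<Rightarrow> real) \<Rightarrow> real"
  assumes f: "\<forall>x\<in>cube n. f x = -1 \<or> f x = 1" and k: "k \<in> {1..n}"
  shows "infl n f k = (\<Sum>x\<in>cube n. ((f x - f (flip k x)) / 2)\<^sup>2) / 2 ^ n"
  by (simp add: boolean_half_difference[OF f k] infl_def finite_cube sum.If_cases Int_def)

lemma sum_fourier_sq_boolean:
  fixes f :: "(nat \<Rightarrow> real) \<Rightarrow> real"
  assumes f: "\<forall>x\<in>cube n. f x = -1 \<or> f x = 1"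
  shows "(\<Sum>S\<in>Pow {1..n}. (fourier n f S)\<^sup>2) = 1"
proof -
  have "(\<Sum>x\<in>cube n. (f x)\<^sup>2) = (\<Sum>x\<in>cube n. 1)"
    using f by (intro sum.cong) auto
  then have "(\<Sum>x\<in>cube n. (f x)\<^sup>2) = 2 ^ n"
    by (simp add: card_cube)
  then show ?thesis by (simp only: parseval) simp
qed

lemma sum_fourier_sq_containing:
  fixes f :: "(nat \<Rightarrow> real) \<Rightarrow> real"
  assumes f: "\<forall>x\<in>cube n. f x = -1 \<or> f x = 1" and k: "k \<in> {1..n}"
  shows "(\<Sum>S | S \<in> Pow {1..n} \<and> k \<in> S. (fourier n f S)\<^sup>2) = infl n f k"
proof -
  have "(\<Sum>S | S \<in> Pow {1..n} \<and> k \<in> S. (fourier n f S)\<^sup>2) =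
        (\<Sum>S\<in>Pow {1..n}. if k \<in> S then (fourier n f S)\<^sup>2 else 0)"
    by (rule sum.inter_filter) simp
  also have "\<dots> = (\<Sum>S\<in>Pow {1..n}. (fourier n (\<lambda>x. (f x - f (flip k x)) / 2) S)\<^sup>2)"
    by (intro sum.cong refl)
      (simp add: fourier_half_difference[OF k] finite_subset[OF _ finite_atLeastAtMost])
  also have "\<dots> = infl n f k"
    by (simp only: parseval infl_eq_sum_half_difference_sq[OF f k])
  finally show ?thesis .
qed

lemma abs_fourier_singleton_le_infl:
  fixes f :: "(nat \<Rightarrow> real) \<Rightarrow> real"
  assumes f: "\<forall>x\<in>cube n. f x = -1 \<or> f x = 1" and k: "k \<in> {1..n}"
  shows "\<bar>fourier n f {k}\<bar> \<le> infl n f k"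
proof -
  let ?g = "\<lambda>x. (f x - f (flip k x)) / 2"
  have "fourier n f {k} = (\<Sum>x\<in>cube n. ?g x * x k) / 2 ^ n"
    using fourier_half_difference[OF k, of "{k}" f] by (simp add: fourier_def)
  then have "\<bar>fourier n f {k}\<bar> = \<bar>\<Sum>x\<in>cube n. ?g x * x k\<bar> / 2 ^ n"
    by simp
  also have "\<dots> \<le> (\<Sum>x\<in>cube n. \<bar>?g x * x k\<bar>) / 2 ^ n"
    by (intro divide_right_mono sum_abs) simp
  also have "(\<Sum>x\<in>cube n. \<bar>?g x * x k\<bar>) = (\<Sum>x\<in>cube n. (?g x)\<^sup>2)"
  proof (intro sum.cong refl)
    fix x assume x: "x \<in> cube n"
    have "\<bar>x k\<bar> = 1" using cube_coordinate[OF x k] by auto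
    then have "\<bar>?g x * x k\<bar> = \<bar>?g x\<bar>"
      by (simp add: abs_mult)
    then show "\<bar>?g x * x k\<bar> = (?g x)\<^sup>2"
      by (simp only: boolean_half_difference[OF f k x])
  qed
  finally show ?thesis
    by (simp add: infl_eq_sum_half_difference_sq[OF f k])
qed

section \<open>Entropy of a distribution on subsets versus its marginals\<close>

lemma sum_Pow_insert:
  assumes "finite A" "a \<notin> A"
  shows "sum g (Pow (insert a A)) = (\<Sum>T\<in>Pow A. g T + g (insert a T))"
proof -
  have "inj_on (insert a) (Pow A)"
    using assms(2) by (intro inj_onI) (metis PowD insert_ident subsetD)
  then have "sum g (insert a ` Pow A) = (\<Sum>T\<in>Pow A. g (insert a T))"
    by (simp add: sum.reindex)
  moreover have "Pow A \<inter> insert a ` Pow A = {}"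
    using assms(2) by auto
  ultimately show ?thesis
    using assms(1) by (simp add: Pow_insert sum.union_disjoint sum.distrib)
qed

lemma sum_Pow_prod_bernoulli:
  fixes t :: "'a \<Rightarrow> 'b::comm_ring_1"
  assumes "finite A"
  shows "(\<Sum>T\<in>Pow A. \<Prod>k\<in>A. if k \<in> T then t k else 1 - t k) = 1"
proof -
  have "(\<Prod>k\<in>A. if k \<in> T then t k else 1 - t k) = (\<Prod>k\<in>T. t k) * (\<Prod>k\<in>A - T. 1 - t k)"
    if "T \<in> Pow A" for T
    using that assms by (simp add: prod.If_cases Int_absorb1 Diff_eq)
  then have "(\<Sum>T\<in>Pow A. \<Prod>k\<in>A. if k \<in> T then t k else 1 - t k) = (\<Prod>k\<in>A. t k + (1 - t k))"
    using prod_add[OF assms, of t "\<lambda>k. 1 - t k"] by simp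
  then show ?thesis by simp
qed

lemma subset_disjoint_from_tail:
  assumes "S \<subseteq> {1..n}" "S \<inter> {2..n} = {}"
  shows "S = {} \<or> S = {1::nat}"
proof -
  have "x = 1" if "x \<in> S" for x
  proof -
    have "x \<in> {1..n}" "x \<notin> {2..n}"
      using that assms by auto
    then show ?thesis by simp
  qed
  then show ?thesis by auto
qed

locale subset_distribution =
  fixes n :: nat and p :: "nat set \<Rightarrow> real"
  assumes dim: "1 \<le> n" and nonneg: "0 \<le> p S" and total: "sum p (Pow {1..n}) = 1"
begin

definition marginal :: "nat \<Rightarrow> real" where
  "marginal k = (\<Sum>S | S \<in> Pow {1..n} \<and> k \<in> S. p S)"

lemma marginal_eq_sum_if: "marginal k = (\<Sum>S\<in>Pow {1..n}. if k \<in> S then p S else 0)"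
  unfolding marginal_def by (rule sum.inter_filter) simp

lemma sum_not_containing: "(\<Sum>S\<in>Pow {1..n}. if k \<notin> S then p S else 0) = 1 - marginal k"
proof -
  have "(\<Sum>S\<in>Pow {1..n}. (if k \<in> S then p S else 0) + (if k \<notin> S then p S else 0)) = 1"
    unfolding total[symmetric] by (rule sum.cong) auto
  then show ?thesis
    by (simp add: marginal_eq_sum_if sum.distrib)
qed

lemma marginal_nonneg: "0 \<le> marginal k"
  by (simp add: marginal_def nonneg sum_nonneg)

lemma marginal_le_one: "marginal k \<le> 1"
proof -
  have "0 \<le> (\<Sum>S\<in>Pow {1..n}. if k \<notin> S then p S else 0)"
    by (simp add: nonneg sum_nonneg)
  then show ?thesis
    using sum_not_containing[of k] by linarith
qed

lemma le_marginal: "S \<in> Pow {1..n} \<Longrightarrow> k \<in> S \<Longrightarrow> p S \<le> marginal k"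
  unfolding marginal_def by (rule member_le_sum) (auto simp: nonneg)

lemma le_one_minus_marginal:
  assumes "S \<in> Pow {1..n}" "k \<notin> S"
  shows "p S \<le> 1 - marginal k"
proof -
  have "p S = (if k \<notin> S then p S else 0)"
    using assms by simp
  also have "\<dots> \<le> (\<Sum>T\<in>Pow {1..n}. if k \<notin> T then p T else 0)"
    by (rule member_le_sum) (use assms in \<open>auto simp: nonneg\<close>)
  finally show ?thesis
    by (simp only: sum_not_containing)
qed

lemma sum_meeting_le_marginals:
  "(\<Sum>S | S \<in> Pow {1..n} \<and> S \<inter> A \<noteq> {}. p S) \<le> (\<Sum>k\<in>A. marginal k)" if "finite A"
proof -
  let ?c = "\<lambda>S. \<Sum>k\<in>A. if k \<in> S then p S else 0"
  have "p S \<le> ?c S" if meets: "S \<inter> A \<noteq> {}" for S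
  proof -
    obtain k where "k \<in> A" "k \<in> S" using meets by auto
    then show ?thesis
      using \<open>finite A\<close> member_le_sum[of k A "\<lambda>k. if k \<in> S then p S else 0"] by (simp add: nonneg)
  qed
  then have "(\<Sum>S | S \<in> Pow {1..n} \<and> S \<inter> A \<noteq> {}. p S) \<le> (\<Sum>S | S \<in> Pow {1..n} \<and> S \<inter> A \<noteq> {}. ?c S)"
    by (intro sum_mono) simp
  also have "\<dots> \<le> (\<Sum>S\<in>Pow {1..n}. ?c S)"
    by (intro sum_mono2) (auto simp: nonneg sum_nonneg)
  also have "\<dots> = (\<Sum>k\<in>A. marginal k)"
    by (subst sum.swap) (simp add: marginal_eq_sum_if)
  finally show ?thesis .
qed

definition coordinate_weight :: "nat \<Rightarrow> nat set \<Rightarrow> real" where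
  "coordinate_weight k S = (if k \<in> S then marginal k else 1 - marginal k)"

text \<open>If \<open>p {} + p {1} = 0\<close> the sets \<open>{}\<close> and \<open>{1}\<close> get weight 0; this is harmless, since
  Gibbs' inequality only needs total mass at most 1.\<close>

definition first_weight :: "nat set \<Rightarrow> real" where
  "first_weight S = (if S \<inter> {2..n} = {} then p S / (p {} + p {1}) else 1 / 2)"

definition reference :: "nat set \<Rightarrow> real" where
  "reference S = (\<Prod>k\<in>{2..n}. coordinate_weight k S) * first_weight S"

lemma coordinate_weight_nonneg: "0 \<le> coordinate_weight k S"
  using marginal_nonneg marginal_le_one by (simp add: coordinate_weight_def)

lemma coordinate_weight_pos:
  assumes "S \<in> Pow {1..n}" "0 < p S"
  shows "0 < coordinate_weight k S"
proof (cases "k \<in> S")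
  case True
  then show ?thesis using le_marginal[OF assms(1) True] assms(2) by (simp add: coordinate_weight_def)
next
  case False
  then show ?thesis
    using le_one_minus_marginal[OF assms(1) False] assms(2) by (simp add: coordinate_weight_def)
qed

lemma first_weight_pos:
  assumes S: "S \<in> Pow {1..n}" and "0 < p S"
  shows "0 < first_weight S"
proof (cases "S \<inter> {2..n} = {}")
  case True
  then have "S = {} \<or> S = {1}"
    using S subset_disjoint_from_tail by blast
  then have "p S \<le> p {} + p {1}"
    using nonneg by auto
  then show ?thesis
    using True \<open>0 < p S\<close> by (simp add: first_weight_def)
qed (simp add: first_weight_def)

lemma sum_reference_le: "sum reference (Pow {1..n}) \<le> 1"
proof -
  let ?A = "{2..n}" and ?w = "\<lambda>T. \<Prod>k\<in>{2..n}. coordinate_weight k T"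
  have split: "{1..n} = insert 1 ?A"
    using dim by auto
  have "reference T + reference (insert 1 T) \<le> ?w T" if "T \<in> Pow ?A" for T
  proof -
    have "?w (insert 1 T) = ?w T"
      by (intro prod.cong) (auto simp: coordinate_weight_def)
    moreover have "first_weight T + first_weight (insert 1 T) \<le> 1"
      using that by (cases "T = {}") (auto simp: first_weight_def Int_absorb2 divide_le_eq_1
          simp flip: add_divide_distrib)
    moreover have "0 \<le> ?w T"
      by (simp add: coordinate_weight_nonneg prod_nonneg)
    ultimately show ?thesis
      by (simp add: reference_def mult_left_le flip: distrib_left)
  qed
  then have "sum reference (Pow {1..n}) \<le> (\<Sum>T\<in>Pow ?A. ?w T)"
    unfolding split by (subst sum_Pow_insert) (auto intro!: sum_mono)
  also have "\<dots> = 1"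
    unfolding coordinate_weight_def by (rule sum_Pow_prod_bernoulli) simp
  finally show ?thesis .
qed

lemma reference_nonneg: "0 \<le> reference S"
  by (simp add: reference_def first_weight_def coordinate_weight_nonneg prod_nonneg nonneg)

lemma reference_pos: "S \<in> Pow {1..n} \<Longrightarrow> 0 < p S \<Longrightarrow> 0 < reference S"
  unfolding reference_def by (intro mult_pos_pos prod_pos coordinate_weight_pos first_weight_pos)

lemma neg_ln_reference:
  assumes "S \<in> Pow {1..n}" "0 < p S"
  shows "- ln (reference S) = (\<Sum>k\<in>{2..n}. - ln (coordinate_weight k S)) + - ln (first_weight S)"
proof -
  have ln_prod: "ln (\<Prod>k\<in>{2..n}. coordinate_weight k S) = (\<Sum>k\<in>{2..n}. ln (coordinate_weight k S))"
    using coordinate_weight_pos[OF assms] by (intro ln_prod) (auto simp: order_less_imp_not_eq2)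
  have "0 < (\<Prod>k\<in>{2..n}. coordinate_weight k S)"
    using coordinate_weight_pos[OF assms] by (simp add: prod_pos)
  then have "ln (reference S) = (\<Sum>k\<in>{2..n}. ln (coordinate_weight k S)) + ln (first_weight S)"
    unfolding reference_def ln_prod[symmetric] using first_weight_pos[OF assms] by (rule ln_mult_pos)
  then show ?thesis
    by (simp add: sum_negf)
qed

lemma coordinate_cross_entropy:
  "(\<Sum>S\<in>Pow {1..n}. p S * - ln (coordinate_weight k S)) = xlog (marginal k) + xlog (1 - marginal k)"
proof -
  have "(\<Sum>S\<in>Pow {1..n}. p S * - ln (coordinate_weight k S)) =
        (\<Sum>S\<in>Pow {1..n}. (if k \<in> S then p S else 0) * - ln (marginal k)
           + (if k \<notin> S then p S else 0) * - ln (1 - marginal k))"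
    by (intro sum.cong) (auto simp: coordinate_weight_def)
  also have "\<dots> = (\<Sum>S\<in>Pow {1..n}. if k \<in> S then p S else 0) * - ln (marginal k)
      + (\<Sum>S\<in>Pow {1..n}. if k \<notin> S then p S else 0) * - ln (1 - marginal k)"
    by (simp only: sum.distrib sum_distrib_right)
  also have "\<dots> = marginal k * - ln (marginal k) + (1 - marginal k) * - ln (1 - marginal k)"
    by (simp only: marginal_eq_sum_if[symmetric] sum_not_containing)
  finally show ?thesis by (simp add: xlog_eq_minus_mult_ln)
qed

lemma first_cross_entropy:
  "(\<Sum>S\<in>Pow {1..n}. p S * - ln (first_weight S)) \<le> (\<Sum>k\<in>{2..n}. marginal k) + p {1} + 2 * sqrt (p {1})"
proof -
  let ?M = "{S. S \<in> Pow {1..n} \<and> S \<inter> {2..n} \<noteq> {}}" and ?a = "p {}" and ?b = "p {1}"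
  have "Pow {1..n} \<subseteq> ?M \<union> {{}, {1}}"
  proof
    fix S assume "S \<in> Pow {1..n}"
    then show "S \<in> ?M \<union> {{}, {1}}"
      using subset_disjoint_from_tail[of S n] by blast
  qed
  then have split: "Pow {1..n} = ?M \<union> {{}, {1}}" "?M \<inter> {{}, {1}} = {}"
    using dim by auto
  have "?a + ?b = sum p {{}, {1}}" by simp
  also have "\<dots> \<le> 1"
    unfolding total[symmetric] using dim by (intro sum_mono2) (auto simp: nonneg)
  finally have mass: "?a + ?b \<le> 1" .
  have "(\<Sum>S\<in>?M. p S * - ln (first_weight S)) = ln 2 * sum p ?M"
    by (simp add: first_weight_def ln_div sum_distrib_left mult.commute)
  also have "\<dots> \<le> sum p ?M"
    using ln_2_less_1 by (intro mult_left_le_one_le) (auto simp: nonneg sum_nonneg)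
  also have "\<dots> \<le> (\<Sum>k\<in>{2..n}. marginal k)"
    by (rule sum_meeting_le_marginals) simp
  finally have "(\<Sum>S\<in>?M. p S * - ln (first_weight S)) \<le> (\<Sum>k\<in>{2..n}. marginal k)" .
  moreover have "?a * - ln (?a / (?a + ?b)) \<le> ?b"
    by (rule neg_ln_fraction_le) (simp_all add: nonneg)
  moreover have "?b * - ln (?b / (?b + ?a)) \<le> 2 * sqrt ?b"
    using neg_ln_fraction_le_xlog[of ?b ?a] xlog_le_two_sqrt[of ?b] mass by (simp add: nonneg)
  moreover have "(\<Sum>S\<in>Pow {1..n}. p S * - ln (first_weight S)) = (\<Sum>S\<in>?M. p S * - ln (first_weight S))
      + (?a * - ln (?a / (?a + ?b)) + ?b * - ln (?b / (?b + ?a)))"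
    by (subst split(1), subst sum.union_disjoint) (use split(2) in \<open>auto simp: first_weight_def add.commute\<close>)
  ultimately show ?thesis
    by linarith
qed

lemma cross_entropy_reference:
  "(\<Sum>S\<in>Pow {1..n}. p S * - ln (reference S))
     = (\<Sum>k\<in>{2..n}. \<Sum>S\<in>Pow {1..n}. p S * - ln (coordinate_weight k S))
       + (\<Sum>S\<in>Pow {1..n}. p S * - ln (first_weight S))"
proof -
  have "p S * - ln (reference S)
      = (\<Sum>k\<in>{2..n}. p S * - ln (coordinate_weight k S)) + p S * - ln (first_weight S)"
    if S: "S \<in> Pow {1..n}" for S
  proof (cases "p S = 0")
    case False
    then have "0 < p S" using nonneg[of S] by simp
    then show ?thesis
      by (simp only: neg_ln_reference[OF S] distrib_left sum_distrib_left)
  qed simp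
  then have "(\<Sum>S\<in>Pow {1..n}. p S * - ln (reference S))
      = (\<Sum>S\<in>Pow {1..n}. \<Sum>k\<in>{2..n}. p S * - ln (coordinate_weight k S))
        + (\<Sum>S\<in>Pow {1..n}. p S * - ln (first_weight S))"
    by (simp only: sum.distrib cong: sum.cong)
  then show ?thesis
    by (subst (asm) sum.swap)
qed

lemma coordinate_cross_entropy_le:
  "(\<Sum>S\<in>Pow {1..n}. p S * - ln (coordinate_weight k S)) \<le> xlog (marginal k) + marginal k"
  unfolding coordinate_cross_entropy
  using xlog_le_one_minus[of "1 - marginal k"] marginal_le_one[of k] by linarith

theorem entropy_le_marginals:
  "(\<Sum>S\<in>Pow {1..n}. xlog (p S))
     \<le> (\<Sum>k\<in>{2..n}. xlog (marginal k) + 2 * marginal k) + p {1} + 2 * sqrt (p {1})"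
proof -
  let ?P = "Pow {1..n}"
  have "(\<Sum>S\<in>?P. xlog (p S)) \<le> (\<Sum>S\<in>?P. p S * - ln (reference S))"
  proof (rule gibbs_inequality)
    show "sum reference ?P \<le> sum p ?P"
      using sum_reference_le total by simp
  qed (simp_all add: nonneg reference_nonneg reference_pos)
  also have "\<dots> \<le> (\<Sum>k\<in>{2..n}. xlog (marginal k) + marginal k)
      + ((\<Sum>k\<in>{2..n}. marginal k) + p {1} + 2 * sqrt (p {1}))"
    unfolding cross_entropy_reference
    by (intro add_mono sum_mono first_cross_entropy coordinate_cross_entropy_le)
  finally show ?thesis
    by (simp add: sum.distrib sum_distrib_left)
qed

end

section \<open>The spectral entropy bound\<close>

lemma ln_2_mult_spec_ent: "ln 2 * spec_ent n f = (\<Sum>S\<in>Pow {1..n}. xlog ((fourier n f S)\<^sup>2))"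
  unfolding spec_ent_def sum_distrib_left by (intro sum.cong refl) (simp add: xlog_def log_def)

lemma subset_distribution_fourier_sq:
  fixes f :: "(nat \<Rightarrow> real) \<Rightarrow> real"
  assumes "1 \<le> n" and f: "\<forall>x\<in>cube n. f x = -1 \<or> f x = 1"
  shows "subset_distribution n (\<lambda>S. (fourier n f S)\<^sup>2)"
  using assms(1) sum_fourier_sq_boolean[OF f] by unfold_locales simp_all

lemma ln_2_mult_spec_ent_le:
  fixes f :: "(nat \<Rightarrow> real) \<Rightarrow> real"
  assumes n: "1 \<le> n" and f: "\<forall>x\<in>cube n. f x = -1 \<or> f x = 1"
  shows "ln 2 * spec_ent n f \<le> 3 * total_infl n f + (\<Sum>k\<in>{2..n}. xlog (infl n f k))"
proof -
  interpret subset_distribution n "\<lambda>S. (fourier n f S)\<^sup>2"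
    using n f by (rule subset_distribution_fourier_sq)
  have marginal_infl: "marginal k = infl n f k" if "k \<in> {1..n}" for k
    using sum_fourier_sq_containing[OF f that] by (simp add: marginal_def)
  have one: "1 \<in> {1..n}"
    using n by simp
  have "(fourier n f {1})\<^sup>2 \<le> infl n f 1"
    using le_marginal[of "{1}" 1] one marginal_infl[OF one] by simp
  moreover have "sqrt ((fourier n f {1})\<^sup>2) \<le> infl n f 1"
    using abs_fourier_singleton_le_infl[OF f one] by simp
  moreover have "total_infl n f = infl n f 1 + (\<Sum>k\<in>{2..n}. infl n f k)"
    using n by (simp add: total_infl_def sum.atLeast_Suc_atMost numeral_2_eq_2)
  moreover have "ln 2 * spec_ent n f
      \<le> (\<Sum>k\<in>{2..n}. xlog (infl n f k) + 2 * infl n f k) + (fourier n f {1})\<^sup>2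
        + 2 * sqrt ((fourier n f {1})\<^sup>2)"
    using entropy_le_marginals marginal_infl by (simp add: ln_2_mult_spec_ent)
  moreover have "0 \<le> (\<Sum>k\<in>{2..n}. infl n f k)"
    by (simp add: sum_nonneg infl_def)
  ultimately show ?thesis
    by (simp add: sum.distrib sum_distrib_left[symmetric])
qed

theorem mainTheorem3:
  shows "\<exists>c1 c2 :: real. c1 > 0 \<and> c2 > 0 \<and>
    (\<forall>n::nat. \<forall>f :: (nat \<Rightarrow> real) \<Rightarrow> real.
       n \<ge> 1 \<longrightarrow> (\<forall>x\<in>cube n. f x = -1 \<or> f x = 1) \<longrightarrow>
       spec_ent n f \<le> c1 * total_infl n f + c2 * (\<Sum>k\<in>{2..n}. xlog (infl n f k)))"
proof (intro exI conjI allI impI)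
  fix n and f :: "(nat \<Rightarrow> real) \<Rightarrow> real"
  assume "n \<ge> 1" "\<forall>x\<in>cube n. f x = -1 \<or> f x = 1"
  then have "ln 2 * spec_ent n f \<le> 3 * total_infl n f + (\<Sum>k\<in>{2..n}. xlog (infl n f k))"
    by (rule ln_2_mult_spec_ent_le)
  then show "spec_ent n f \<le> 3 / ln 2 * total_infl n f + 1 / ln 2 * (\<Sum>k\<in>{2..n}. xlog (infl n f k))"
    by (simp add: field_simps)
qed simp_all

end
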